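(* The space $\mathcal P_\infty$ of proper poset limits is a contractible topological space; in particular it is connected and simply connected.
   Context: A poset is a nonempty set with a strict partial order $<$. For finite posets $Q,P$, $t(Q,P)$ is the proportion of all maps $\varphi$ from the ground set of $Q$ to that of $P$ with $x<_Qy\Rightarrow\varphi(x)<_P\varphi(y)$. Let $\mathcal P$ be the set of isomorphism classes of finite nonempty posets; identify $\mathcal P$ with its (injective) image under $P\mapsto((t(Q,P))_{Q\in\mathcal P},|P|^{-1})\in[0,1]^{\mathcal P}\times[0,1]$, let $\overline{\mathcal P}$ be its closure in the product topology, and let $\mathcal P_\infty=\overline{\mathcal P}\setminus\mathcal P$ with the subspace topology (a compact metrizable space). *)

theory Defs
  imports "HOL-Analysis.Analysis"
begin

text \<open>A finite nonempty poset is represented concretely as a pair (n, R) where the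
ground set is {0..<n} (n \<ge> 1) and R is a strict partial order on it.\<close>

type_synonym fposet = "nat \<times> (nat \<times> nat) set"

definition is_fposet :: "fposet \<Rightarrow> bool" where
  "is_fposet P \<longleftrightarrow> (case P of (n, R) \<Rightarrow>
      n \<ge> 1 \<and> R \<subseteq> {0..<n} \<times> {0..<n} \<and> irrefl R \<and> trans R)"

definition poset_iso :: "fposet \<Rightarrow> fposet \<Rightarrow> bool" where
  "poset_iso P Q \<longleftrightarrow> (\<exists>f. bij_betw f {0..<fst P} {0..<fst Q} \<and>
      (\<forall>x\<in>{0..<fst P}. \<forall>y\<in>{0..<fst P}. (x, y) \<in> snd P \<longleftrightarrow> (f x, f y) \<in> snd Q))"

text \<open>Canonical representative of the isomorphism class of a poset; the set of
isomorphism classes of finite nonempty posets is identified with the set of canonical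
representatives.\<close>

definition canon :: "fposet \<Rightarrow> fposet" where
  "canon P = (SOME Q. is_fposet Q \<and> poset_iso P Q)"

definition poset_classes :: "fposet set" where
  "poset_classes = canon ` {P. is_fposet P}"

definition hom_density :: "fposet \<Rightarrow> fposet \<Rightarrow> real" where
  "hom_density Q P =
     real (card {\<phi> \<in> {0..<fst Q} \<rightarrow>\<^sub>E {0..<fst P}.
                  \<forall>x y. (x, y) \<in> snd Q \<longrightarrow> (\<phi> x, \<phi> y) \<in> snd P})
     / real (fst P) ^ (fst Q)"

definition poset_point :: "fposet \<Rightarrow> (fposet \<Rightarrow> real) \<times> real" where
  "poset_point P = ((\<lambda>Q. if Q \<in> poset_classes then hom_density Q P else undefined),
                    1 / real (fst P))"

definition ambient_top :: "((fposet \<Rightarrow> real) \<times> real) topology" where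
  "ambient_top = prod_topology
      (product_topology (\<lambda>_. top_of_set {0..1}) poset_classes) (top_of_set {0..1})"

definition posets_embedded :: "((fposet \<Rightarrow> real) \<times> real) set" where
  "posets_embedded = poset_point ` poset_classes"

definition poset_limits_proper :: "((fposet \<Rightarrow> real) \<times> real) set" where
  "poset_limits_proper = (ambient_top closure_of posets_embedded) - posets_embedded"

end

theory Submission
  imports Defs
begin

text \<open>Adding isolated points to a poset \<open>P\<close> on \<open>n\<close> points until it has \<open>N\<close> points multiplies
  \<open>t(Q, P)\<close> by \<open>(n / N)^k\<close>, where \<open>k\<close> is the number of non-isolated points of \<open>Q\<close>, and
  \<open>|P|\<^sup>-\<^sup>1\<close> by \<open>n / N\<close>. Replacing \<open>n / N\<close> by \<open>1 - s\<close> defines a map on the whole ambient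
  space that is jointly continuous in \<open>(s, x)\<close>. Proper limits are exactly the limit points with
  last coordinate \<open>0\<close>; near such a limit lie arbitrarily large posets, and padding them
  realises every fraction \<open>s\<close> up to a small error, so the map preserves proper limits. At \<open>s = 1\<close> it sends every proper limit
  to the limit of the antichains, so it contracts the space of proper limits onto that point.\<close>

lemma exists_ratio_near:
  fixes c :: real
  assumes n: "n \<ge> 1" and c: "c \<in> {0..1}"
  shows "\<exists>N\<ge>n. \<bar>real n / real N - c\<bar> \<le> 1 / real n"
proof (cases "c = 0")
  case True
  have "real n / real (n * n) = 1 / real n"
    using n by simp
  with True n show ?thesis
    by (intro exI[of _ "n * n"]) auto
next
  case False
  with c have c: "0 < c" "c \<le> 1" by auto
  define N where "N = nat \<lceil>real n / c\<rceil>"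
  have "real n \<le> real n / c"
    using c by (simp add: field_simps mult_left_le_one_le)
  then have N: "real n / c \<le> real N" "real N < real n / c + 1"
    using n unfolding N_def by linarith+
  with \<open>real n \<le> real n / c\<close> have "n \<le> N" "real N > 0"
    using n by linarith+
  have "real n / real N \<le> c"
    using N(1) c \<open>real N > 0\<close> by (simp add: field_simps)
  moreover have "c - real n / real N < c / real N"
  proof -
    have "c * real N - real n < c"
      using N(2) c by (simp add: field_simps)
    then have "(c * real N - real n) / real N < c / real N"
      using \<open>real N > 0\<close> by (rule divide_strict_right_mono)
    then show ?thesis
      using \<open>real N > 0\<close> by (simp add: diff_divide_distrib)
  qed
  moreover have "c / real N \<le> 1 / real n"
  proof -
    have "c * real n \<le> real N"
      using c \<open>n \<le> N\<close> mult_left_le_one_le[of "real n" c] by linarith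
    then show ?thesis
      using n \<open>real N > 0\<close> by (simp add: field_simps)
  qed
  ultimately show ?thesis
    using \<open>n \<le> N\<close> by (intro exI[of _ N]) auto
qed

lemma in_closure_of_inverse_sequence:
  assumes f: "continuous_map (top_of_set {0..1}) X f"
    and S: "\<And>n. f (inverse (real (Suc n))) \<in> S"
  shows "f 0 \<in> X closure_of S"
proof -
  let ?A = "range (\<lambda>n. inverse (real (Suc n)))"
  have "0 \<in> closure ?A"
    unfolding closure_sequential using LIMSEQ_inverse_real_of_nat rangeI by metis
  moreover have "?A \<subseteq> {0..1}"
    by (auto simp: field_simps)
  ultimately have "0 \<in> top_of_set {0..1} closure_of ?A"
    by (simp add: closure_of_subtopology Int_absorb1)
  then have "f 0 \<in> X closure_of f ` ?A"
    using continuous_map_image_closure_subset[OF f] by blast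
  also have "\<dots> \<subseteq> X closure_of S"
    using S by (intro closure_of_mono) auto
  finally show ?thesis .
qed

definition strict_homs :: "nat set \<Rightarrow> (nat \<times> nat) set \<Rightarrow> nat \<Rightarrow> (nat \<times> nat) set \<Rightarrow> (nat \<Rightarrow> nat) set" where
  "strict_homs I S N R = {\<phi> \<in> I \<rightarrow>\<^sub>E {0..<N}. \<forall>x y. (x, y) \<in> S \<longrightarrow> (\<phi> x, \<phi> y) \<in> R}"

lemma hom_density_eq_card_strict_homs:
  "hom_density Q P = real (card (strict_homs {0..<fst Q} (snd Q) (fst P) (snd P))) / real (fst P) ^ fst Q"
  unfolding hom_density_def strict_homs_def by simp

lemma finite_strict_homs: "finite I \<Longrightarrow> finite (strict_homs I S N R)"
  unfolding strict_homs_def by (rule finite_subset[OF _ finite_PiE[of I "\<lambda>_. {0..<N}"]]) auto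

lemma restrict_Field_in_strict_homs:
  assumes \<phi>: "\<phi> \<in> strict_homs I S N R" and R: "R \<subseteq> {0..<n} \<times> {0..<n}"
  shows "restrict \<phi> (Field S) \<in> strict_homs (Field S) S n R"
proof -
  have "\<phi> x < n" if "x \<in> Field S" for x
  proof -
    from that obtain y where "(x, y) \<in> S \<or> (y, x) \<in> S"
      unfolding Field_def by blast
    then have "(\<phi> x, \<phi> y) \<in> R \<or> (\<phi> y, \<phi> x) \<in> R"
      using \<phi> unfolding strict_homs_def by blast
    with R show ?thesis by auto
  qed
  with \<phi> show ?thesis
    by (auto simp: strict_homs_def FieldI1 FieldI2)
qed

text \<open>A strict homomorphism is constrained only on the non-isolated points of its domain;
  the isolated ones may go anywhere.\<close>

lemma card_strict_homs_split:
  assumes I: "finite I" and S: "S \<subseteq> I \<times> I" and R: "R \<subseteq> {0..<n} \<times> {0..<n}" and "n \<le> N"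
  shows "card (strict_homs I S N R) = card (strict_homs (Field S) S n R) * N ^ (card I - card (Field S))"
proof -
  let ?K = "Field S"
  have KI: "?K \<subseteq> I" using S unfolding Field_def by auto
  let ?split = "\<lambda>\<phi>. (restrict \<phi> ?K, restrict \<phi> (I - ?K))"
  let ?join = "\<lambda>p x. if x \<in> ?K then fst p x else snd p x"
  have "bij_betw ?split (strict_homs I S N R) (strict_homs ?K S n R \<times> ((I - ?K) \<rightarrow>\<^sub>E {0..<N}))"
  proof (rule bij_betw_byWitness[where f' = ?join])
    show "\<forall>\<phi>\<in>strict_homs I S N R. ?join (?split \<phi>) = \<phi>"
      by (auto simp: strict_homs_def PiE_iff extensional_def fun_eq_iff)
    show "\<forall>p\<in>strict_homs ?K S n R \<times> ((I - ?K) \<rightarrow>\<^sub>E {0..<N}). ?split (?join p) = p"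
      by (auto simp: strict_homs_def PiE_iff extensional_def fun_eq_iff)
    show "?split ` strict_homs I S N R \<subseteq> strict_homs ?K S n R \<times> ((I - ?K) \<rightarrow>\<^sub>E {0..<N})"
    proof (rule image_subsetI)
      fix \<phi> assume \<phi>: "\<phi> \<in> strict_homs I S N R"
      then have "restrict \<phi> (I - ?K) \<in> (I - ?K) \<rightarrow>\<^sub>E {0..<N}"
        by (auto simp: strict_homs_def)
      with restrict_Field_in_strict_homs[OF \<phi> R]
      show "?split \<phi> \<in> strict_homs ?K S n R \<times> ((I - ?K) \<rightarrow>\<^sub>E {0..<N})"
        by simp
    qed
    show "?join ` (strict_homs ?K S n R \<times> ((I - ?K) \<rightarrow>\<^sub>E {0..<N})) \<subseteq> strict_homs I S N R"
    proof (rule image_subsetI)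
      fix p assume p: "p \<in> strict_homs ?K S n R \<times> ((I - ?K) \<rightarrow>\<^sub>E {0..<N})"
      have "?join p \<in> I \<rightarrow>\<^sub>E {0..<N}"
        using p KI \<open>n \<le> N\<close> by (auto simp: strict_homs_def PiE_iff extensional_def)
      moreover have "(?join p x, ?join p y) \<in> R" if "(x, y) \<in> S" for x y
        using p that by (auto simp: strict_homs_def FieldI1 FieldI2)
      ultimately show "?join p \<in> strict_homs I S N R"
        by (simp add: strict_homs_def)
    qed
  qed
  then have "card (strict_homs I S N R) = card (strict_homs ?K S n R) * card ((I - ?K) \<rightarrow>\<^sub>E {0..<N})"
    by (simp add: bij_betw_same_card card_cartesian_product)
  also have "card ((I - ?K) \<rightarrow>\<^sub>E {0..<N}) = N ^ (card I - card ?K)"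
    using I KI finite_subset[OF KI I] by (simp add: card_PiE card_Diff_subset)
  finally show ?thesis .
qed

lemma poset_iso_refl: "poset_iso P P"
  unfolding poset_iso_def by (rule exI[of _ id]) auto

lemma poset_iso_sym:
  assumes "poset_iso P P'"
  shows "poset_iso P' P"
proof -
  obtain f where f: "bij_betw f {0..<fst P} {0..<fst P'}"
    and f_rel: "\<forall>x\<in>{0..<fst P}. \<forall>y\<in>{0..<fst P}. (x, y) \<in> snd P \<longleftrightarrow> (f x, f y) \<in> snd P'"
    using assms unfolding poset_iso_def by blast
  let ?g = "inv_into {0..<fst P} f"
  have g: "bij_betw ?g {0..<fst P'} {0..<fst P}"
    by (rule bij_betw_inv_into[OF f])
  have "(x, y) \<in> snd P' \<longleftrightarrow> (?g x, ?g y) \<in> snd P"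
    if "x \<in> {0..<fst P'}" "y \<in> {0..<fst P'}" for x y
    using f_rel bij_betwE[OF g] bij_betw_inv_into_right[OF f] that by metis
  with g show ?thesis
    unfolding poset_iso_def by blast
qed

lemma poset_iso_imp_fst_eq: "poset_iso P P' \<Longrightarrow> fst P = fst P'"
  unfolding poset_iso_def using bij_betw_same_card by fastforce

lemma card_strict_homs_le_poset_iso:
  assumes "poset_iso P P'" and I: "finite I" and S: "S \<subseteq> I \<times> I"
  shows "card (strict_homs I S (fst P) (snd P)) \<le> card (strict_homs I S (fst P') (snd P'))"
proof -
  obtain f where f: "bij_betw f {0..<fst P} {0..<fst P'}"
    and f_rel: "\<forall>x\<in>{0..<fst P}. \<forall>y\<in>{0..<fst P}. (x, y) \<in> snd P \<longleftrightarrow> (f x, f y) \<in> snd P'"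
    using assms(1) unfolding poset_iso_def by blast
  let ?F = "\<lambda>\<phi>. restrict (f \<circ> \<phi>) I"
  have range: "\<phi> x \<in> {0..<fst P}" if "\<phi> \<in> strict_homs I S (fst P) (snd P)" "x \<in> I" for \<phi> x
    using that by (auto simp: strict_homs_def)
  have "inj_on ?F (strict_homs I S (fst P) (snd P))"
  proof (rule inj_onI)
    fix \<phi> \<psi> assume \<phi>: "\<phi> \<in> strict_homs I S (fst P) (snd P)" and \<psi>: "\<psi> \<in> strict_homs I S (fst P) (snd P)"
      and eq: "?F \<phi> = ?F \<psi>"
    have "\<phi> x = \<psi> x" if "x \<in> I" for x
    proof -
      have "f (\<phi> x) = f (\<psi> x)"
        using fun_cong[OF eq, of x] that by simp
      then show ?thesis
        using inj_onD[OF bij_betw_imp_inj_on[OF f]] range[OF \<phi> that] range[OF \<psi> that] by blast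
    qed
    moreover have "\<phi> \<in> extensional I" "\<psi> \<in> extensional I"
      using \<phi> \<psi> by (simp_all add: strict_homs_def PiE_iff)
    ultimately show "\<phi> = \<psi>"
      by (intro extensionalityI[of _ I]) auto
  qed
  moreover have "?F ` strict_homs I S (fst P) (snd P) \<subseteq> strict_homs I S (fst P') (snd P')"
  proof (rule image_subsetI)
    fix \<phi> assume \<phi>: "\<phi> \<in> strict_homs I S (fst P) (snd P)"
    have "?F \<phi> \<in> I \<rightarrow>\<^sub>E {0..<fst P'}"
      using range[OF \<phi>] bij_betwE[OF f] by (simp add: restrict_PiE_iff)
    moreover have "(?F \<phi> x, ?F \<phi> y) \<in> snd P'" if xy: "(x, y) \<in> S" for x y
    proof -
      have "x \<in> I" "y \<in> I" using xy S by auto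
      moreover have "(\<phi> x, \<phi> y) \<in> snd P"
        using \<phi> xy by (simp add: strict_homs_def)
      ultimately show ?thesis
        using f_rel range[OF \<phi>] by simp
    qed
    ultimately show "?F \<phi> \<in> strict_homs I S (fst P') (snd P')"
      by (simp add: strict_homs_def)
  qed
  ultimately show ?thesis
    using card_inj_on_le finite_strict_homs[OF I] by blast
qed

lemma is_fposet_imp_relation_subset: "is_fposet P \<Longrightarrow> snd P \<subseteq> {0..<fst P} \<times> {0..<fst P}"
  unfolding is_fposet_def by (auto split: prod.splits)

lemma is_fposet_imp_fst_ge_1: "is_fposet P \<Longrightarrow> fst P \<ge> 1"
  unfolding is_fposet_def by (auto split: prod.splits)

lemma is_fposet_enlarge: "is_fposet (n, R) \<Longrightarrow> n \<le> N \<Longrightarrow> is_fposet (N, R)"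
  unfolding is_fposet_def by auto

lemma hom_density_poset_iso:
  assumes "is_fposet Q" and "poset_iso P P'"
  shows "hom_density Q P = hom_density Q P'"
proof -
  note S = is_fposet_imp_relation_subset[OF assms(1)]
  have "card (strict_homs {0..<fst Q} (snd Q) (fst P) (snd P)) =
        card (strict_homs {0..<fst Q} (snd Q) (fst P') (snd P'))"
    using card_strict_homs_le_poset_iso[OF assms(2) _ S] poset_iso_sym[OF assms(2)]
      card_strict_homs_le_poset_iso[of P' P, OF _ _ S] by (simp add: le_antisym)
  then show ?thesis
    using poset_iso_imp_fst_eq[OF assms(2)] by (simp add: hom_density_eq_card_strict_homs)
qed

lemma canon_poset_iso: "is_fposet P \<Longrightarrow> is_fposet (canon P) \<and> poset_iso P (canon P)"
  unfolding canon_def by (rule someI[of _ P]) (simp add: poset_iso_refl)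

lemma is_fposet_if_in_poset_classes: "Q \<in> poset_classes \<Longrightarrow> is_fposet Q"
  unfolding poset_classes_def using canon_poset_iso by auto

lemma poset_point_canon:
  assumes "is_fposet P"
  shows "poset_point (canon P) = poset_point P"
proof -
  have iso: "poset_iso (canon P) P"
    using canon_poset_iso[OF assms] poset_iso_sym by blast
  show ?thesis
    using hom_density_poset_iso[OF is_fposet_if_in_poset_classes iso] poset_iso_imp_fst_eq[OF iso]
    unfolding poset_point_def by auto
qed

lemma poset_point_in_posets_embedded: "is_fposet P \<Longrightarrow> poset_point P \<in> posets_embedded"
  unfolding posets_embedded_def poset_classes_def using poset_point_canon by (metis image_eqI mem_Collect_eq)

lemma posets_embedded_eq: "posets_embedded = poset_point ` {P. is_fposet P}"
  using poset_point_in_posets_embedded is_fposet_if_in_poset_classes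
  unfolding posets_embedded_def by blast

definition nonisolated :: "fposet \<Rightarrow> nat" where
  "nonisolated Q = card (Field (snd Q))"

lemma Field_subset_if_is_fposet: "is_fposet Q \<Longrightarrow> Field (snd Q) \<subseteq> {0..<fst Q}"
  using is_fposet_imp_relation_subset unfolding Field_def by blast

lemma hom_density_eq_card_strict_homs_nonisolated:
  assumes Q: "is_fposet Q" and R: "R \<subseteq> {0..<n} \<times> {0..<n}" and "1 \<le> n" "n \<le> N"
  shows "hom_density Q (N, R) = real (card (strict_homs (Field (snd Q)) (snd Q) n R)) / real N ^ nonisolated Q"
proof -
  note S = is_fposet_imp_relation_subset[OF Q]
  have k: "nonisolated Q \<le> fst Q"
    unfolding nonisolated_def using card_mono[OF _ Field_subset_if_is_fposet[OF Q]] by simp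
  have "card (strict_homs {0..<fst Q} (snd Q) N R) =
        card (strict_homs (Field (snd Q)) (snd Q) n R) * N ^ (fst Q - nonisolated Q)"
    using card_strict_homs_split[OF _ S R \<open>n \<le> N\<close>] unfolding nonisolated_def by simp
  moreover have "real N ^ fst Q = real N ^ (fst Q - nonisolated Q) * real N ^ nonisolated Q"
    using k by (metis le_add_diff_inverse2 power_add)
  ultimately show ?thesis
    using \<open>1 \<le> n\<close> \<open>n \<le> N\<close> by (simp add: hom_density_eq_card_strict_homs)
qed

lemma hom_density_add_isolated:
  assumes Q: "is_fposet Q" and P: "is_fposet (n, R)" and "n \<le> N"
  shows "hom_density Q (N, R) = (real n / real N) ^ nonisolated Q * hom_density Q (n, R)"
proof -
  have n: "1 \<le> n" using is_fposet_imp_fst_ge_1[OF P] by simp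
  note R = is_fposet_imp_relation_subset[OF P, simplified]
  show ?thesis
    using hom_density_eq_card_strict_homs_nonisolated[OF Q R n order.refl]
      hom_density_eq_card_strict_homs_nonisolated[OF Q R n \<open>n \<le> N\<close>] n
    by (simp add: power_divide)
qed

lemma card_strict_homs_le: "finite I \<Longrightarrow> card (strict_homs I S N R) \<le> N ^ card I"
  using card_mono[of "I \<rightarrow>\<^sub>E {0..<N}" "strict_homs I S N R"]
  by (simp add: strict_homs_def card_PiE finite_PiE)

lemma hom_density_in_unit_interval:
  assumes "fst P \<ge> 1"
  shows "hom_density Q P \<in> {0..1}"
proof -
  have "real (card (strict_homs {0..<fst Q} (snd Q) (fst P) (snd P))) \<le> real (fst P) ^ fst Q"
    using card_strict_homs_le[of "{0..<fst Q}"] by (metis card_atLeastLessThan diff_zero finite_atLeastLessThan of_nat_le_iff of_nat_power)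
  then show ?thesis
    using assms by (simp add: hom_density_eq_card_strict_homs divide_le_eq_1)
qed

lemma hom_density_edgeless:
  assumes "snd Q = {}" and "fst P \<ge> 1"
  shows "hom_density Q P = 1"
proof -
  have "strict_homs {0..<fst Q} (snd Q) (fst P) (snd P) = {0..<fst Q} \<rightarrow>\<^sub>E {0..<fst P}"
    using assms(1) by (simp add: strict_homs_def)
  then show ?thesis
    using assms(2) by (simp add: hom_density_eq_card_strict_homs card_PiE)
qed

lemma hom_density_antichain:
  assumes "snd Q \<noteq> {}"
  shows "hom_density Q (n, {}) = 0"
proof -
  have "strict_homs {0..<fst Q} (snd Q) n {} = {}"
    using assms by (auto simp: strict_homs_def)
  then show ?thesis
    by (simp add: hom_density_eq_card_strict_homs)
qed

lemma nonisolated_eq_0_iff: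
  assumes "is_fposet Q"
  shows "nonisolated Q = 0 \<longleftrightarrow> snd Q = {}"
proof -
  have "finite (Field (snd Q))"
    using Field_subset_if_is_fposet[OF assms] by (rule finite_subset) simp
  moreover have "Field (snd Q) = {} \<longleftrightarrow> snd Q = {}"
    unfolding Field_def by auto
  ultimately show ?thesis
    unfolding nonisolated_def by simp
qed

lemma topspace_ambient_top:
  "topspace ambient_top = (poset_classes \<rightarrow>\<^sub>E {0..1::real}) \<times> {0..1::real}"
  unfolding ambient_top_def by simp

lemma continuous_map_ambient_top_snd: "continuous_map ambient_top euclideanreal snd"
  unfolding ambient_top_def by (rule continuous_map_into_fulltopology[OF continuous_map_snd])

lemma continuous_map_ambient_top_coordinate:
  assumes "Q \<in> poset_classes"
  shows "continuous_map ambient_top euclideanreal (\<lambda>y. fst y Q)"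
proof -
  have "continuous_map (product_topology (\<lambda>_. top_of_set {0..1::real}) poset_classes) euclideanreal (\<lambda>t. t Q)"
    by (rule continuous_map_into_fulltopology[OF continuous_map_product_projection[OF assms]])
  then show ?thesis
    unfolding ambient_top_def using continuous_map_compose[OF continuous_map_fst] by (simp add: o_def)
qed

lemma continuous_map_into_ambient_top:
  assumes "f \<in> topspace X \<rightarrow> topspace ambient_top"
    and "\<And>Q. Q \<in> poset_classes \<Longrightarrow> continuous_map X euclideanreal (\<lambda>x. fst (f x) Q)"
    and "continuous_map X euclideanreal (\<lambda>x. snd (f x))"
  shows "continuous_map X ambient_top f"
proof -
  have "fst (f x) \<in> poset_classes \<rightarrow>\<^sub>E {0..1}" "snd (f x) \<in> {0..1}" if "x \<in> topspace X" for x
    using funcset_mem[OF assms(1) that] by (simp_all add: topspace_ambient_top mem_Times_iff)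
  with assms(2,3) show ?thesis
    unfolding ambient_top_def continuous_map_pairwise o_def
    by (auto simp: continuous_map_componentwise continuous_map_in_subtopology PiE_iff)
qed

lemma Hausdorff_space_ambient_top: "Hausdorff_space ambient_top"
  unfolding ambient_top_def
  by (simp add: Hausdorff_space_prod_topology Hausdorff_space_product_topology Hausdorff_space_subtopology)

lemma poset_point_in_topspace:
  assumes "fst P \<ge> 1"
  shows "poset_point P \<in> topspace ambient_top"
  using assms hom_density_in_unit_interval[OF assms]
  by (auto simp: topspace_ambient_top poset_point_def PiE_iff extensional_def)

lemma posets_embedded_subset_topspace: "posets_embedded \<subseteq> topspace ambient_top"
  unfolding posets_embedded_eq using poset_point_in_topspace is_fposet_imp_fst_ge_1 by blast

lemma snd_poset_point: "snd (poset_point P) = 1 / real (fst P)"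
  by (simp add: poset_point_def)

lemma snd_pos_if_in_posets_embedded: "y \<in> posets_embedded \<Longrightarrow> snd y > 0"
  unfolding posets_embedded_eq using is_fposet_imp_fst_ge_1 by (fastforce simp: snd_poset_point)

text \<open>Points with last coordinate above \<open>c\<close> come from posets with fewer than \<open>1 / c\<close>
  elements, of which there are finitely many.\<close>

lemma finite_posets_embedded_snd_gt:
  assumes "c > 0"
  shows "finite {y \<in> posets_embedded. snd y > c}"
proof -
  define B where "B = nat \<lceil>1 / c\<rceil>"
  have "{y \<in> posets_embedded. snd y > c} \<subseteq> poset_point ` ({0..<B} \<times> Pow ({0..<B} \<times> {0..<B}))"
  proof
    fix y assume y: "y \<in> {y \<in> posets_embedded. snd y > c}"
    then obtain P where P: "is_fposet P" "y = poset_point P"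
      unfolding posets_embedded_eq by blast
    have "1 / real (fst P) > c" "real (fst P) \<ge> 1"
      using y P is_fposet_imp_fst_ge_1 by (auto simp: snd_poset_point)
    then have "real (fst P) < 1 / c"
      using assms by (simp add: field_simps)
    then have "fst P < B"
      unfolding B_def by linarith
    then have "P \<in> {0..<B} \<times> Pow ({0..<B} \<times> {0..<B})"
      using is_fposet_imp_relation_subset[OF P(1)] by (auto simp: mem_Times_iff)
    with P(2) show "y \<in> poset_point ` ({0..<B} \<times> Pow ({0..<B} \<times> {0..<B}))"
      by blast
  qed
  then show ?thesis
    by (rule finite_subset) simp
qed

abbreviation poset_closure :: "((fposet \<Rightarrow> real) \<times> real) set" where
  "poset_closure \<equiv> ambient_top closure_of posets_embedded"

text \<open>A point of positive last coordinate has a neighbourhood meeting only finitely many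
  embedded posets, so in the Hausdorff ambient space it cannot be a proper limit.\<close>

lemma snd_eq_0_if_in_poset_limits_proper:
  assumes "x \<in> poset_limits_proper"
  shows "snd x = 0"
proof (rule ccontr)
  assume "snd x \<noteq> 0"
  have x: "x \<in> poset_closure" "x \<notin> posets_embedded"
    using assms unfolding poset_limits_proper_def by auto
  then have "x \<in> topspace ambient_top"
    by (simp add: in_closure_of)
  with \<open>snd x \<noteq> 0\<close> have "snd x > 0"
    by (auto simp: topspace_ambient_top)
  define U where "U = {y \<in> topspace ambient_top. snd y \<in> {snd x / 2<..}}"
  have "openin ambient_top U"
    unfolding U_def by (rule openin_continuous_map_preimage[OF continuous_map_ambient_top_snd]) simp
  moreover have "x \<in> U"
    unfolding U_def using \<open>snd x > 0\<close> \<open>x \<in> topspace ambient_top\<close> by simp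
  ultimately have U: "openin ambient_top U" "x \<in> U" .
  have "finite (U \<inter> posets_embedded)"
    using finite_posets_embedded_snd_gt[of "snd x / 2"] \<open>snd x > 0\<close>
    by (auto simp: U_def elim: rev_finite_subset)
  then have "closedin ambient_top (U \<inter> posets_embedded)"
    using Hausdorff_imp_t1_space[OF Hausdorff_space_ambient_top] posets_embedded_subset_topspace
    unfolding t1_space_closedin_finite by blast
  moreover have "x \<in> ambient_top closure_of (U \<inter> posets_embedded)"
    using openin_Int_closure_of_subset[OF U(1)] U(2) x(1) by blast
  ultimately show False
    using x(2) closure_of_closedin by blast
qed

text \<open>On the point of a poset on \<open>n\<close> elements, \<open>pad_isolated s\<close> is the effect of adding
  isolated points until they form the fraction \<open>s\<close> of the ground set.\<close>

definition pad_isolated :: "real \<Rightarrow> (fposet \<Rightarrow> real) \<times> real \<Rightarrow> (fposet \<Rightarrow> real) \<times> real" where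
  "pad_isolated s y =
     (restrict (\<lambda>Q. (1 - s) ^ nonisolated Q * fst y Q) poset_classes, (1 - s) * snd y)"

lemma pad_isolated_in_topspace:
  assumes "s \<in> {0..1}" and "y \<in> topspace ambient_top"
  shows "pad_isolated s y \<in> topspace ambient_top"
proof -
  have "(1 - s) ^ k * t \<in> {0..1}" if "t \<in> {0..1}" for k and t :: real
    using assms(1) that by (auto simp: mult_le_one power_le_one)
  from this[of _ 1] this assms(2) show ?thesis
    by (auto simp: pad_isolated_def topspace_ambient_top mem_Times_iff PiE_iff)
qed

lemma continuous_map_pad_isolated:
  "continuous_map (prod_topology (top_of_set {0..1}) ambient_top) ambient_top
     (\<lambda>p. pad_isolated (fst p) (snd p))"
proof (rule continuous_map_into_ambient_top)
  let ?Z = "prod_topology (top_of_set {0..1::real}) ambient_top"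
  show "(\<lambda>p. pad_isolated (fst p) (snd p)) \<in> topspace ?Z \<rightarrow> topspace ambient_top"
    using pad_isolated_in_topspace by auto
  have s: "continuous_map ?Z euclideanreal (\<lambda>p. 1 - fst p)"
    by (intro continuous_map_diff continuous_map_const[THEN iffD2]
        continuous_map_into_fulltopology[OF continuous_map_fst]) simp
  have y: "continuous_map ?Z ambient_top snd"
    by (rule continuous_map_snd)
  show "continuous_map ?Z euclideanreal (\<lambda>p. fst (pad_isolated (fst p) (snd p)) Q)"
    if "Q \<in> poset_classes" for Q
    using that continuous_map_compose[OF y continuous_map_ambient_top_coordinate[OF that]]
    by (simp add: pad_isolated_def o_def continuous_map_real_mult continuous_map_real_pow s)
  show "continuous_map ?Z euclideanreal (\<lambda>p. snd (pad_isolated (fst p) (snd p)))"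
    using continuous_map_compose[OF y continuous_map_ambient_top_snd]
    by (simp add: pad_isolated_def o_def continuous_map_real_mult s)
qed

lemma pad_isolated_poset_point:
  assumes P: "is_fposet (n, R)" and "n \<le> N"
  shows "pad_isolated (1 - real n / real N) (poset_point (n, R)) = poset_point (N, R)"
proof -
  have "n \<ge> 1"
    using is_fposet_imp_fst_ge_1[OF P] by simp
  then show ?thesis
    using hom_density_add_isolated[OF is_fposet_if_in_poset_classes P \<open>n \<le> N\<close>] \<open>n \<le> N\<close>
    by (auto simp: pad_isolated_def poset_point_def fun_eq_iff)
qed

lemma pad_isolated_0:
  assumes "y \<in> topspace ambient_top"
  shows "pad_isolated 0 y = y"
  using assms by (auto simp: pad_isolated_def topspace_ambient_top PiE_iff prod_eq_iff extensional_restrict)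

lemma poset_point_near_limit:
  assumes x: "x \<in> poset_closure" "snd x = 0"
    and V: "openin ambient_top V" "x \<in> V" and "\<delta> > 0"
  obtains n R where "is_fposet (n, R)" "1 / real n < \<delta>" "poset_point (n, R) \<in> V"
proof -
  let ?W = "V \<inter> {y \<in> topspace ambient_top. snd y \<in> {..<\<delta>}}"
  have "openin ambient_top ?W"
    by (intro openin_Int V(1) openin_continuous_map_preimage[OF continuous_map_ambient_top_snd]) simp
  moreover have "x \<in> ?W"
    using x V(2) \<open>\<delta> > 0\<close> by (simp add: in_closure_of)
  ultimately obtain y where "y \<in> posets_embedded" "y \<in> ?W"
    using x(1) unfolding in_closure_of by meson
  then obtain P where "is_fposet P" "poset_point P \<in> ?W"
    unfolding posets_embedded_eq by auto
  then show thesis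
    using that[of "fst P" "snd P"] by (simp add: snd_poset_point)
qed

text \<open>Near a limit the padding parameter can be matched exactly: a poset on \<open>n\<close> points
  padded to \<open>N\<close> points is the embedded poset \<open>(N, R)\<close>, and \<open>n / N\<close> comes within \<open>1 / n\<close>
  of any prescribed ratio.\<close>

lemma pad_isolated_in_poset_closure:
  assumes x: "x \<in> poset_closure" "snd x = 0" and s: "s \<in> {0..1}"
  shows "pad_isolated s x \<in> poset_closure"
  unfolding in_closure_of
proof (intro conjI allI impI)
  let ?Z = "prod_topology (top_of_set {0..1::real}) ambient_top"
  have x_top: "x \<in> topspace ambient_top"
    using x(1) by (simp add: in_closure_of)
  then show "pad_isolated s x \<in> topspace ambient_top"
    by (rule pad_isolated_in_topspace[OF s])
  fix T assume T: "pad_isolated s x \<in> T \<and> openin ambient_top T"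
  let ?pre = "{p \<in> topspace ?Z. pad_isolated (fst p) (snd p) \<in> T}"
  have "openin ?Z ?pre" "(s, x) \<in> ?pre"
    using T openin_continuous_map_preimage[OF continuous_map_pad_isolated] s x_top by auto
  then obtain U V where U: "openin (top_of_set {0..1}) U" "s \<in> U"
    and V: "openin ambient_top V" "x \<in> V" and UV: "U \<times> V \<subseteq> ?pre"
    unfolding openin_prod_topology_alt by meson
  obtain \<delta> where "\<delta> > 0" and \<delta>: "\<And>s'. s' \<in> {0..1} \<Longrightarrow> dist s' s < \<delta> \<Longrightarrow> s' \<in> U"
    using U unfolding openin_euclidean_subtopology_iff by blast
  obtain n R where P: "is_fposet (n, R)" "1 / real n < \<delta>" "poset_point (n, R) \<in> V"
    using poset_point_near_limit[OF x V \<open>\<delta> > 0\<close>] .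
  obtain N where "n \<le> N" and N: "\<bar>real n / real N - (1 - s)\<bar> \<le> 1 / real n"
    using exists_ratio_near[of n "1 - s"] is_fposet_imp_fst_ge_1[OF P(1)] s by auto
  have "real n / real N \<le> 1"
    using \<open>n \<le> N\<close> by (auto simp: divide_le_eq_1)
  moreover have "dist (1 - real n / real N) s < \<delta>"
    using N P(2) unfolding dist_real_def by arith
  ultimately have "1 - real n / real N \<in> U"
    by (intro \<delta>) auto
  then have "(1 - real n / real N, poset_point (n, R)) \<in> ?pre"
    using UV P(3) by (intro subsetD[OF UV]) simp
  then have "pad_isolated (1 - real n / real N) (poset_point (n, R)) \<in> T"
    by simp
  then show "\<exists>y. y \<in> posets_embedded \<and> y \<in> T"
    using pad_isolated_poset_point[OF P(1) \<open>n \<le> N\<close>]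
      poset_point_in_posets_embedded[OF is_fposet_enlarge[OF P(1) \<open>n \<le> N\<close>]] by metis
qed

lemma pad_isolated_in_poset_limits_proper:
  assumes "x \<in> poset_limits_proper" and "s \<in> {0..1}"
  shows "pad_isolated s x \<in> poset_limits_proper"
proof -
  have "snd x = 0"
    by (rule snd_eq_0_if_in_poset_limits_proper[OF assms(1)])
  then have "pad_isolated s x \<in> poset_closure" "snd (pad_isolated s x) = 0"
    using pad_isolated_in_poset_closure assms unfolding poset_limits_proper_def
    by (auto simp: pad_isolated_def)
  then show ?thesis
    using snd_pos_if_in_posets_embedded[of "pad_isolated s x"] unfolding poset_limits_proper_def by auto
qed

text \<open>The limit of the antichains \<open>(N, {})\<close> as \<open>N \<rightarrow> \<infinity>\<close>.\<close>

definition antichain_limit :: "(fposet \<Rightarrow> real) \<times> real" where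
  "antichain_limit = (restrict (\<lambda>Q. if snd Q = {} then 1 else 0) poset_classes, 0)"

lemma fst_poset_point_antichain:
  assumes "n \<ge> 1"
  shows "fst (poset_point (n, {})) = fst antichain_limit"
  using assms hom_density_edgeless[of _ "(n, {})"] hom_density_antichain[of _ n]
  by (auto simp: poset_point_def antichain_limit_def fun_eq_iff)

lemma antichain_limit_in_poset_closure: "antichain_limit \<in> poset_closure"
proof -
  have "fst antichain_limit \<in> topspace (product_topology (\<lambda>_. top_of_set {0..1::real}) poset_classes)"
    by (auto simp: antichain_limit_def)
  then have "continuous_map (top_of_set {0..1}) ambient_top (\<lambda>z. (fst antichain_limit, z))"
    unfolding ambient_top_def continuous_map_pairwise o_def by simp
  moreover have "(fst antichain_limit, inverse (real (Suc n))) \<in> posets_embedded" for n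
  proof -
    have "is_fposet (Suc n, {})"
      by (simp add: is_fposet_def irrefl_def trans_def)
    moreover have "poset_point (Suc n, {}) = (fst antichain_limit, inverse (real (Suc n)))"
      using fst_poset_point_antichain[of "Suc n"] by (simp add: prod_eq_iff snd_poset_point inverse_eq_divide)
    ultimately show ?thesis
      using poset_point_in_posets_embedded by metis
  qed
  ultimately have "(fst antichain_limit, 0) \<in> poset_closure"
    by (rule in_closure_of_inverse_sequence)
  then show ?thesis
    by (simp add: antichain_limit_def)
qed

lemma antichain_limit_in_poset_limits_proper: "antichain_limit \<in> poset_limits_proper"
  using antichain_limit_in_poset_closure snd_pos_if_in_posets_embedded[of antichain_limit]
  unfolding poset_limits_proper_def by (auto simp: antichain_limit_def)

lemma edgeless_coordinate_in_poset_closure: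
  assumes x: "x \<in> poset_closure" and Q: "Q \<in> poset_classes" "snd Q = {}"
  shows "fst x Q = 1"
proof -
  let ?S = "{y \<in> topspace ambient_top. fst y Q \<in> {1}}"
  have "closedin ambient_top ?S"
    by (rule closedin_continuous_map_preimage[OF continuous_map_ambient_top_coordinate[OF Q(1)]]) simp
  moreover have "posets_embedded \<subseteq> ?S"
    using posets_embedded_subset_topspace hom_density_edgeless[OF Q(2)] is_fposet_imp_fst_ge_1 Q(1)
    by (auto simp: posets_embedded_eq poset_point_def)
  ultimately have "poset_closure \<subseteq> ?S"
    by (intro closure_of_minimal)
  with x show ?thesis
    by blast
qed

lemma pad_isolated_1:
  assumes "x \<in> poset_limits_proper"
  shows "pad_isolated 1 x = antichain_limit"
proof -
  have "x \<in> poset_closure"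
    using assms unfolding poset_limits_proper_def by blast
  have "0 ^ nonisolated Q * fst x Q = (if snd Q = {} then 1 else 0)"
    if "Q \<in> poset_classes" for Q :: fposet
  proof (cases "snd Q = {}")
    case True
    then show ?thesis
      using nonisolated_eq_0_iff[OF is_fposet_if_in_poset_classes[OF that]]
        edgeless_coordinate_in_poset_closure[OF \<open>x \<in> poset_closure\<close> that] by simp
  next
    case False
    then show ?thesis
      using nonisolated_eq_0_iff[OF is_fposet_if_in_poset_classes[OF that]] by simp
  qed
  then show ?thesis
    using snd_eq_0_if_in_poset_limits_proper[OF assms]
    by (simp add: pad_isolated_def antichain_limit_def cong: restrict_cong)
qed

lemma continuous_map_pad_isolated_poset_limits_proper:
  "continuous_map (prod_topology (top_of_set {0..1}) (subtopology ambient_top poset_limits_proper))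
     (subtopology ambient_top poset_limits_proper) (\<lambda>p. pad_isolated (fst p) (snd p))"
proof -
  have "continuous_map (prod_topology (top_of_set {0..1}) (subtopology ambient_top poset_limits_proper))
      ambient_top (\<lambda>p. pad_isolated (fst p) (snd p))"
    unfolding prod_topology_subtopology(2)
    by (rule continuous_map_from_subtopology[OF continuous_map_pad_isolated])
  then show ?thesis
    using pad_isolated_in_poset_limits_proper by (auto simp: continuous_map_in_subtopology)
qed

theorem theorem11p1:
  shows "poset_limits_proper \<noteq> {} \<and>
         contractible_space (subtopology ambient_top poset_limits_proper)"
proof
  show "poset_limits_proper \<noteq> {}"
    using antichain_limit_in_poset_limits_proper by blast
  let ?X = "subtopology ambient_top poset_limits_proper"
  have "homotopic_with (\<lambda>_. True) ?X ?X (pad_isolated 0) (pad_isolated 1)"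
    unfolding homotopic_with_def
    using continuous_map_pad_isolated_poset_limits_proper by force
  moreover have "homotopic_with (\<lambda>_. True) ?X ?X id (pad_isolated 0)"
    by (rule homotopic_with_equal) (auto simp: pad_isolated_0)
  moreover have "homotopic_with (\<lambda>_. True) ?X ?X (\<lambda>_. antichain_limit) (pad_isolated 1)"
    using antichain_limit_in_poset_limits_proper antichain_limit_in_poset_closure[unfolded in_closure_of]
    by (intro homotopic_with_equal) (auto simp: pad_isolated_1 poset_limits_proper_def)
  ultimately have "homotopic_with (\<lambda>_. True) ?X ?X id (\<lambda>_. antichain_limit)"
    using homotopic_with_trans homotopic_with_symD by blast
  then show "contractible_space ?X"
    unfolding contractible_space_def by blast
qed

end
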